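(* If $\mathbb{K}=(K,+,0)$ is a positive commutative monoid that is weakly cancellative and totally canonically pre-ordered, then $\mathbb{K}$ has the transportation property.
   Context: Positive: $p+q=0$ implies $p=q=0$. The canonical pre-order: $b\sqsubseteq c$ iff $b+a=c$ for some $a\in K$. Weakly cancellative: $a+b=a+c$ implies $b=c$ or $b=0$ or $c=0$. Totally canonically pre-ordered: for all $b,c$, $b\sqsubseteq c$ or $c\sqsubseteq b$. Transportation property: for all positive integers $m,n$ and all $b\in K^m$, $c\in K^n$ with $b_1+\dots+b_m=c_1+\dots+c_n$, there exists $(d_{ij})\in K^{m\times n}$ with $\sum_{j}d_{ij}=b_i$ for all $i\in[m]$ and $\sum_i d_{ij}=c_j$ for all $j\in[n]$. *)

theory Defs
  imports Main
begin

definition positive_monoid :: "'a::comm_monoid_add itself \<Rightarrow> bool" where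
  "positive_monoid _ \<longleftrightarrow> (\<forall>p q :: 'a. p + q = 0 \<longrightarrow> p = 0 \<and> q = 0)"

definition canon_le :: "'a::comm_monoid_add \<Rightarrow> 'a \<Rightarrow> bool" where
  "canon_le b c \<longleftrightarrow> (\<exists>a. b + a = c)"

definition weakly_cancellative :: "'a::comm_monoid_add itself \<Rightarrow> bool" where
  "weakly_cancellative _ \<longleftrightarrow>
     (\<forall>a b c :: 'a. a + b = a + c \<longrightarrow> b = c \<or> b = 0 \<or> c = 0)"

definition totally_canon_preordered :: "'a::comm_monoid_add itself \<Rightarrow> bool" where
  "totally_canon_preordered _ \<longleftrightarrow> (\<forall>b c :: 'a. canon_le b c \<or> canon_le c b)"

definition transportation_property :: "'a::comm_monoid_add itself \<Rightarrow> bool" where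
  "transportation_property _ \<longleftrightarrow>
     (\<forall>(m::nat) (n::nat) (b::nat \<Rightarrow> 'a) (c::nat \<Rightarrow> 'a).
        0 < m \<longrightarrow> 0 < n \<longrightarrow> (\<Sum>i<m. b i) = (\<Sum>j<n. c j) \<longrightarrow>
        (\<exists>d :: nat \<Rightarrow> nat \<Rightarrow> 'a.
           (\<forall>i<m. (\<Sum>j<n. d i j) = b i) \<and> (\<forall>j<n. (\<Sum>i<m. d i j) = c j)))"

end

theory Submission
  imports Defs
begin

text \<open>
  Greedy construction in the spirit of the north-west corner rule: pick a supply \<open>b i\<^sub>0\<close>
  and a demand \<open>c j\<^sub>0\<close>; by totality one of them, say \<open>b i\<^sub>0\<close>, is below the other,
  \<open>b i\<^sub>0 + a = c j\<^sub>0\<close>. Ship all of \<open>b i\<^sub>0\<close> to \<open>j\<^sub>0\<close>, lower the demand at \<open>j\<^sub>0\<close> to \<open>a\<close> and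
  recurse without row \<open>i\<^sub>0\<close>. Both remaining totals become equal after adding \<open>b i\<^sub>0\<close>, so
  weak cancellativity makes them equal unless one of them is \<open>0\<close>; in that case positivity
  forces the remaining supplies (or demands) to vanish and a single row (or column) carries
  everything.
\<close>

definition transport_plan ::
    "'i set \<Rightarrow> 'i set \<Rightarrow> ('i \<Rightarrow> 'a::comm_monoid_add) \<Rightarrow> ('i \<Rightarrow> 'a) \<Rightarrow> ('i \<Rightarrow> 'i \<Rightarrow> 'a) \<Rightarrow> bool" where
  "transport_plan I J b c d \<longleftrightarrow> (\<forall>i\<in>I. (\<Sum>j\<in>J. d i j) = b i) \<and> (\<forall>j\<in>J. (\<Sum>i\<in>I. d i j) = c j)"

lemma positive_monoid_add_eq_0_iff:
  fixes p q :: "'a::comm_monoid_add"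
  assumes "positive_monoid TYPE('a)"
  shows "p + q = 0 \<longleftrightarrow> p = 0 \<and> q = 0"
  using assms unfolding positive_monoid_def by (metis add_0)

lemma sum_eq_0_iff_positive_monoid:
  fixes f :: "'i \<Rightarrow> 'a::comm_monoid_add"
  assumes "positive_monoid TYPE('a)" and "finite A"
  shows "sum f A = 0 \<longleftrightarrow> (\<forall>x\<in>A. f x = 0)"
  using assms(2)
  by (induction A rule: finite_induct) (simp_all add: positive_monoid_add_eq_0_iff[OF assms(1)])

lemma transport_plan_transpose:
  "transport_plan I J b c d \<Longrightarrow> transport_plan J I c b (\<lambda>j i. d i j)"
  by (simp add: transport_plan_def)

lemma transport_plan_zero:
  "\<forall>i\<in>I. b i = 0 \<Longrightarrow> \<forall>j\<in>J. c j = 0 \<Longrightarrow> transport_plan I J b c (\<lambda>_ _. 0)"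
  by (simp add: transport_plan_def)

lemma transport_plan_single_row:
  assumes "finite I" "i\<^sub>0 \<in> I" "\<forall>i\<in>I - {i\<^sub>0}. b i = 0" "b i\<^sub>0 = sum c J"
  shows "transport_plan I J b c (\<lambda>i j. if i = i\<^sub>0 then c j else 0)"
  unfolding transport_plan_def
proof (intro conjI ballI)
  fix i assume "i \<in> I"
  with assms(3,4) show "(\<Sum>j\<in>J. if i = i\<^sub>0 then c j else 0) = b i"
    by (cases "i = i\<^sub>0") auto
qed (use assms(1,2) in \<open>simp add: sum.delta'\<close>)

lemma transport_plan_single_column:
  assumes "finite J" "j\<^sub>0 \<in> J" "\<forall>j\<in>J - {j\<^sub>0}. c j = 0" "c j\<^sub>0 = sum b I"
  shows "transport_plan I J b c (\<lambda>i j. if j = j\<^sub>0 then b i else 0)"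
  using transport_plan_transpose[OF transport_plan_single_row[OF assms]] by simp

lemma transport_plan_insert_row:
  assumes "finite I" "finite J" "i\<^sub>0 \<in> I" "j\<^sub>0 \<in> J" "b i\<^sub>0 + a = c j\<^sub>0"
    and "transport_plan (I - {i\<^sub>0}) J b (c(j\<^sub>0 := a)) d"
  shows "transport_plan I J b c (d(i\<^sub>0 := (\<lambda>j. if j = j\<^sub>0 then b i\<^sub>0 else 0)))"
  unfolding transport_plan_def
proof (intro conjI ballI)
  fix i assume "i \<in> I"
  with assms(2,4,6) show "(\<Sum>j\<in>J. (d(i\<^sub>0 := (\<lambda>j. if j = j\<^sub>0 then b i\<^sub>0 else 0))) i j) = b i"
    by (cases "i = i\<^sub>0") (auto simp: transport_plan_def sum.delta')
next
  fix j assume "j \<in> J"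
  let ?d = "d(i\<^sub>0 := (\<lambda>j. if j = j\<^sub>0 then b i\<^sub>0 else 0))"
  have "(\<Sum>i\<in>I. ?d i j) = ?d i\<^sub>0 j + (\<Sum>i\<in>I - {i\<^sub>0}. d i j)"
    using assms(1,3) by (simp add: sum.remove)
  also have "(\<Sum>i\<in>I - {i\<^sub>0}. d i j) = (c(j\<^sub>0 := a)) j"
    using assms(6) \<open>j \<in> J\<close> by (simp add: transport_plan_def)
  finally show "(\<Sum>i\<in>I. ?d i j) = c j"
    using assms(5) by simp
qed

lemma transport_plan_remove_row:
  fixes b c :: "'i \<Rightarrow> 'a::comm_monoid_add"
  assumes pos: "positive_monoid TYPE('a)" and wc: "weakly_cancellative TYPE('a)"
    and fin: "finite I" "finite J" and i\<^sub>0: "i\<^sub>0 \<in> I" and j\<^sub>0: "j\<^sub>0 \<in> J"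
    and below: "b i\<^sub>0 + a = c j\<^sub>0" and balanced: "sum b I = sum c J"
    and smaller: "\<And>c'. sum b (I - {i\<^sub>0}) = sum c' J \<Longrightarrow> \<exists>d. transport_plan (I - {i\<^sub>0}) J b c' d"
  shows "\<exists>d. transport_plan I J b c d"
proof -
  let ?c' = "c(j\<^sub>0 := a)"
  have c_split: "sum c J = c j\<^sub>0 + sum c (J - {j\<^sub>0})"
    using fin j\<^sub>0 by (simp add: sum.remove)
  have c'_split: "sum ?c' J = a + sum c (J - {j\<^sub>0})"
    using fin j\<^sub>0 by (simp add: sum.remove)
  have "b i\<^sub>0 + sum b (I - {i\<^sub>0}) = sum b I"
    using fin i\<^sub>0 by (simp add: sum.remove)
  also have "\<dots> = b i\<^sub>0 + sum ?c' J"
    using balanced c_split c'_split by (simp flip: below add: add.assoc)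
  finally consider "sum b (I - {i\<^sub>0}) = sum ?c' J" | "sum b (I - {i\<^sub>0}) = 0" | "sum ?c' J = 0"
    using wc unfolding weakly_cancellative_def by blast
  then show ?thesis
  proof cases
    case 1
    with smaller obtain d where "transport_plan (I - {i\<^sub>0}) J b ?c' d" by blast
    then show ?thesis
      using transport_plan_insert_row[where b = b and c = c, OF fin i\<^sub>0 j\<^sub>0 below] by blast
  next
    case 2
    then have "\<forall>i\<in>I - {i\<^sub>0}. b i = 0"
      using fin(1) by (simp add: sum_eq_0_iff_positive_monoid[OF pos])
    moreover have "b i\<^sub>0 = sum c J"
      using 2 balanced fin(1) i\<^sub>0 by (simp add: sum.remove)
    ultimately show ?thesis
      using transport_plan_single_row[OF fin(1) i\<^sub>0] by blast
  next
    case 3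
    then have "sum c (J - {j\<^sub>0}) = 0"
      using c'_split positive_monoid_add_eq_0_iff[OF pos] by simp
    then have "\<forall>j\<in>J - {j\<^sub>0}. c j = 0"
      using fin(2) by (simp add: sum_eq_0_iff_positive_monoid[OF pos])
    moreover have "c j\<^sub>0 = sum b I"
      using \<open>sum c (J - {j\<^sub>0}) = 0\<close> balanced c_split by simp
    ultimately show ?thesis
      using transport_plan_single_column[OF fin(2) j\<^sub>0] by blast
  qed
qed

lemma transport_plan_exists:
  fixes b c :: "'i \<Rightarrow> 'a::comm_monoid_add"
  assumes pos: "positive_monoid TYPE('a)" and wc: "weakly_cancellative TYPE('a)"
    and tot: "totally_canon_preordered TYPE('a)"
  shows "finite I \<Longrightarrow> finite J \<Longrightarrow> sum b I = sum c J \<Longrightarrow> \<exists>d. transport_plan I J b c d"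
proof (induction "card I + card J" arbitrary: I J b c rule: less_induct)
  case (less I J b c)
  show ?case
  proof (cases "I = {} \<or> J = {}")
    case True
    with less.prems have "\<forall>i\<in>I. b i = 0" "\<forall>j\<in>J. c j = 0"
      by (auto simp: sum_eq_0_iff_positive_monoid[OF pos])
    then show ?thesis using transport_plan_zero by blast
  next
    case False
    then obtain i\<^sub>0 j\<^sub>0 where i\<^sub>0: "i\<^sub>0 \<in> I" and j\<^sub>0: "j\<^sub>0 \<in> J" by blast
    have smaller_rows: "card (I - {i\<^sub>0}) + card J < card I + card J"
      using card_Diff1_less[OF less.prems(1) i\<^sub>0] by simp
    have smaller_columns: "card (J - {j\<^sub>0}) + card I < card I + card J"
      using card_Diff1_less[OF less.prems(2) j\<^sub>0] by simp
    from tot consider a where "b i\<^sub>0 + a = c j\<^sub>0" | a where "c j\<^sub>0 + a = b i\<^sub>0"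
      unfolding totally_canon_preordered_def canon_le_def by blast
    then show ?thesis
    proof cases
      case 1
      show ?thesis
        by (rule transport_plan_remove_row[OF pos wc less.prems(1,2) i\<^sub>0 j\<^sub>0 1 less.prems(3)])
          (use less.hyps[OF smaller_rows] less.prems in blast)
    next
      case 2
      have "\<exists>d. transport_plan J I c b d"
        by (rule transport_plan_remove_row[OF pos wc less.prems(2,1) j\<^sub>0 i\<^sub>0 2 less.prems(3)[symmetric]])
          (use less.hyps[OF smaller_columns] less.prems in blast)
      then show ?thesis using transport_plan_transpose by blast
    qed
  qed
qed

theorem proposition23:
  assumes "positive_monoid TYPE('a::comm_monoid_add)"
    and "weakly_cancellative TYPE('a)"
    and "totally_canon_preordered TYPE('a)"
  shows "transportation_property TYPE('a)"
  unfolding transportation_property_def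
proof (intro allI impI)
  fix m n :: nat and b c :: "nat \<Rightarrow> 'a"
  assume "(\<Sum>i<m. b i) = (\<Sum>j<n. c j)"
  then obtain d where "transport_plan {..<m} {..<n} b c d"
    using transport_plan_exists[OF assms] by blast
  then show "\<exists>d. (\<forall>i<m. (\<Sum>j<n. d i j) = b i) \<and> (\<forall>j<n. (\<Sum>i<m. d i j) = c j)"
    unfolding transport_plan_def by auto
qed

end
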